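(* Let $P_k$ denote the $k$-th Legendre polynomial, $k\in\mathbb N$. For every $n\in\mathbb N$, $j\in\{1,\dots,n\}$, $\mathfrak t_n\in\mathbb T(n)$, $\boldsymbol\varphi\in[0,\pi]^{n-1}$, $u\in S^2$, unit vector $\xi\in\mathbb R^3$, and every measurable $\mathrm B:S^2\to\mathbb{SO}(3)$ with $\mathrm B(u)e_3=u$, $$\int_{(0,2\pi)^{n-1}}P_k\big(\mathrm B(u)\mathrm O^*_{j,n}(\mathfrak t_n,\boldsymbol\varphi,\boldsymbol\theta)e_3\cdot\xi\big)\,u_{(0,2\pi)}^{\otimes(n-1)}(d\boldsymbol\theta)=P_k(u\cdot\xi)\,f^{(k)}_{j,n}(\mathfrak t_n,\boldsymbol\varphi),$$ where $f^{(k)}_{1,1}\equiv1$ and, for $n\ge2$, $f^{(k)}_{j,n}(\mathfrak t_n,\boldsymbol\varphi)=f^{(k)}_{j,n_l}(\mathfrak t_n^l,\boldsymbol\varphi^l)P_k(\cos\varphi_{n-1})$ for $j\le n_l$ and $f^{(k)}_{j,n}(\mathfrak t_n,\boldsymbol\varphi)=f^{(k)}_{j-n_l,n_r}(\mathfrak t_n^r,\boldsymbol\varphi^r)P_k(\sin\varphi_{n-1})$ for $j>n_l$.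
   Context: $e_3={}^t(0,0,1)$; $u_{(0,2\pi)}^{\otimes(n-1)}$ is the uniform probability on $(0,2\pi)^{n-1}$ (no integral if $n=1$). Trees: a McKean binary tree is a finite rooted tree in which every node has zero or two children, distinguished as left and right; leaves numbered $1,\dots,n$ left to right; $\mathbb T(n)$ those with $n$ leaves, $\mathfrak t_1$ the one-node tree; for $n\ge2$, $\mathfrak t_n^l,\mathfrak t_n^r$ are the subtrees rooted at the left and right child of the root, with $n_l$ and $n_r=n-n_l$ leaves. For $\boldsymbol\varphi=(\varphi_1,\dots,\varphi_{n-1})$: $\boldsymbol\varphi^l=(\varphi_1,\dots,\varphi_{n_l-1})$, $\boldsymbol\varphi^r=(\varphi_{n_l},\dots,\varphi_{n-2})$ (void if $n_l=1$, resp. $n_r=1$), and $\boldsymbol\theta^l,\boldsymbol\theta^r$ likewise for $\boldsymbol\theta\in(0,2\pi)^{n-1}$. $\mathrm M^l(\varphi,\theta)=\begin{pmatrix}-\cos\theta\cos\varphi&\sin\theta&\cos\theta\sin\varphi\\-\sin\theta\cos\varphi&-\cos\theta&\sin\theta\sin\varphi\\ \sin\varphi&0&\cos\varphi\end{pmatrix}$, $\mathrm M^r(\varphi,\theta)=\begin{pmatrix}\sin\theta&\cos\theta\sin\varphi&-\cos\theta\cos\varphi\\-\cos\theta&\sin\theta\sin\varphi&-\sin\theta\cos\varphi\\0&\cos\varphi&\sin\varphi\end{pmatrix}$. $\mathrm O^*_{1,1}\equiv\mathrm{Id}$ and, for $n\ge2$, $\mathrm O^*_{j,n}(\mathfrak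 t_n,\boldsymbol\varphi,\boldsymbol\theta)=\mathrm M^l(\varphi_{n-1},\theta_{n-1})\mathrm O^*_{j,n_l}(\mathfrak t_n^l,\boldsymbol\varphi^l,\boldsymbol\theta^l)$ for $j\le n_l$ and $=\mathrm M^r(\varphi_{n-1},\theta_{n-1})\mathrm O^*_{j-n_l,n_r}(\mathfrak t_n^r,\boldsymbol\varphi^r,\boldsymbol\theta^r)$ for $j>n_l$. *)

theory Defs
  imports "HOL-Analysis.Analysis"
begin

fun legendre :: "nat \<Rightarrow> real \<Rightarrow> real" where
  "legendre 0 x = 1"
| "legendre (Suc 0) x = x"
| "legendre (Suc (Suc m)) x =
     ((2 * real m + 3) * x * legendre (Suc m) x - (real m + 1) * legendre m x) / (real m + 2)"

datatype mtree = Leaf | Node mtree mtree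

fun leaves :: "mtree \<Rightarrow> nat" where
  "leaves Leaf = 1"
| "leaves (Node l r) = leaves l + leaves r"

definition e3 :: "real^3" where "e3 = vector [0, 0, 1]"

definition Ml :: "real \<Rightarrow> real \<Rightarrow> real^3^3" where
  "Ml \<phi> \<theta> = vector [
     vector [- cos \<theta> * cos \<phi>, sin \<theta>, cos \<theta> * sin \<phi>],
     vector [- sin \<theta> * cos \<phi>, - cos \<theta>, sin \<theta> * sin \<phi>],
     vector [sin \<phi>, 0, cos \<phi>]]"

definition Mr :: "real \<Rightarrow> real \<Rightarrow> real^3^3" where
  "Mr \<phi> \<theta> = vector [
     vector [sin \<theta>, cos \<theta> * sin \<phi>, - cos \<theta> * cos \<phi>],
     vector [- cos \<theta>, sin \<theta> * sin \<phi>, - sin \<theta> * cos \<phi>],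
     vector [0, cos \<phi>, sin \<phi>]]"

text \<open>Angle vectors (phi_1,...,phi_(n-1)) are represented as functions nat => real,
  0-based: phi_i (1-based) is  phi (i-1).  For a tree with n leaves the left subtree
  gets the prefix (indices 0..n_l-2, i.e. the same function), the right subtree gets
  phi_(n_l),...,phi_(n-2), i.e. \<lambda>i. phi (i + n_l - 1), and phi_(n-1) is phi (n-2).
  Leaf index j is 1-based.\<close>
fun Ostar :: "mtree \<Rightarrow> nat \<Rightarrow> (nat \<Rightarrow> real) \<Rightarrow> (nat \<Rightarrow> real) \<Rightarrow> real^3^3" where
  "Ostar Leaf j \<phi> \<theta> = mat 1"
| "Ostar (Node l r) j \<phi> \<theta> =
     (let nl = leaves l; n = leaves l + leaves r in
      if j \<le> nl then Ml (\<phi> (n - 2)) (\<theta> (n - 2)) ** Ostar l j \<phi> \<theta>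
      else Mr (\<phi> (n - 2)) (\<theta> (n - 2)) **
           Ostar r (j - nl) (\<lambda>i. \<phi> (i + nl - 1)) (\<lambda>i. \<theta> (i + nl - 1)))"

fun fk :: "nat \<Rightarrow> mtree \<Rightarrow> nat \<Rightarrow> (nat \<Rightarrow> real) \<Rightarrow> real" where
  "fk k Leaf j \<phi> = 1"
| "fk k (Node l r) j \<phi> =
     (let nl = leaves l; n = leaves l + leaves r in
      if j \<le> nl then fk k l j \<phi> * legendre k (cos (\<phi> (n - 2)))
      else fk k r (j - nl) (\<lambda>i. \<phi> (i + nl - 1)) * legendre k (sin (\<phi> (n - 2))))"

definition SO3 :: "(real^3^3) set" where
  "SO3 = {A. orthogonal_matrix A \<and> det A = 1}"

definition unif_angles :: "nat \<Rightarrow> (nat \<Rightarrow> real) measure" where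
  "unif_angles n = PiM {..<n - 1} (\<lambda>_. uniform_measure lborel {0<..<2*pi})"

end

theory Submission
  imports Defs "HOL-Probability.Infinite_Product_Measure"
begin

text \<open>
  The rotation  Ostar t j phi theta  attached to leaf  j  of a tree  t  is a product
  of one matrix  Ml  or  Mr  per node on the path to the root; the node matrix
  depends on one uniformly distributed angle  theta_i, and different nodes use
  different angles.  Averaging over the angle of the root node moves the pole of
  the remaining rotation uniformly around a circle of latitude  cos phi  (for  Ml)
  resp.  sin phi  (for  Mr), and the addition theorem of Legendre polynomials turns
  this average into the factor  P_k(cos phi)  resp.  P_k(sin phi).  An induction on
  the tree, with Fubini for the product of the uniform angle measures, then yields
  the product formula  fk.
\<close>

text \<open>Homogeneous Legendre polynomials:  hom_legendre k p R  satisfies Bonnet's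
  recursion with  1 - x^2  replaced by  R - p^2, so that  P_k(x) = hom_legendre k x (x^2 - 1)
  and  hom_legendre k (c p) (c^2 R) = c^k hom_legendre k p R.\<close>
fun hom_legendre :: "nat \<Rightarrow> complex \<Rightarrow> complex \<Rightarrow> complex" where
  "hom_legendre 0 p R = 1"
| "hom_legendre (Suc 0) p R = p"
| "hom_legendre (Suc (Suc m)) p R =
     ((2 * of_nat m + 3) * p * hom_legendre (Suc m) p R
      - (of_nat m + 1) * (p\<^sup>2 - R) * hom_legendre m p R) / (of_nat m + 2)"

lemma legendre_eq_hom_legendre:
  "complex_of_real (legendre k x) = hom_legendre k (of_real x) ((of_real x)\<^sup>2 - 1)"
  by (induction k x rule: legendre.induct) simp_all

lemma hom_legendre_scale:
  "hom_legendre k (c * p) (c\<^sup>2 * R) = c ^ k * hom_legendre k p R"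
proof (induction k p R rule: hom_legendre.induct)
  case (3 m p R)
  have "(2 * of_nat m + 3) * (c * p) * (c ^ Suc m * hom_legendre (Suc m) p R)
        - (of_nat m + 1) * ((c * p)\<^sup>2 - c\<^sup>2 * R) * (c ^ m * hom_legendre m p R)
      = c ^ Suc (Suc m) * ((2 * of_nat m + 3) * p * hom_legendre (Suc m) p R
        - (of_nat m + 1) * (p\<^sup>2 - R) * hom_legendre m p R)"
    by (simp add: algebra_simps power2_eq_square)
  then show ?case
    using 3 by (simp only: hom_legendre.simps times_divide_eq_right)
qed simp_all

lemma derivative_integral_zero:
  fixes g g' :: "real \<Rightarrow> 'a::banach"
  assumes "\<And>x. (g has_vector_derivative g' x) (at x)" and "a \<le> b" and "g b = g a"
  shows "(g' has_integral 0) {a..b}"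
proof -
  have "(g' has_integral (g b - g a)) {a..b}"
    by (rule fundamental_theorem_of_calculus) (auto intro: has_vector_derivative_at_within assms)
  then show ?thesis
    using assms(3) by simp
qed

definition circle_moment :: "complex \<Rightarrow> complex \<Rightarrow> complex \<Rightarrow> nat \<Rightarrow> complex" where
  "circle_moment p q r m =
     integral {0..2 * pi} (\<lambda>\<theta>::real. (p + q * cos (of_real \<theta>) + r * sin (of_real \<theta>)) ^ m)"

lemma circle_moment_has_integral:
  "((\<lambda>\<theta>::real. (p + q * cos (of_real \<theta>) + r * sin (of_real \<theta>)) ^ m)
     has_integral circle_moment p q r m) {0..2 * pi}"
  unfolding circle_moment_def
  by (intro integrable_integral integrable_continuous_interval continuous_intros)

lemma circle_moment_0: "circle_moment p q r 0 = of_real (2 * pi)"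
  by (simp add: circle_moment_def scaleR_conv_of_real)

lemma circle_moment_1: "circle_moment p q r 1 = of_real (2 * pi) * p"
proof -
  define Fd where "Fd = (\<lambda>\<theta>::real. - q * sin (of_real \<theta>) + r * cos (of_real \<theta>))"
  have "(Fd has_vector_derivative (p - (p + q * cos (of_real x) + r * sin (of_real x)))) (at x)" for x
    unfolding Fd_def
    by (rule has_vector_derivative_real_field) (auto intro!: derivative_eq_intros simp: algebra_simps)
  then have "((\<lambda>\<theta>::real. p - (p + q * cos (of_real \<theta>) + r * sin (of_real \<theta>))) has_integral 0) {0..2 * pi}"
    by (rule derivative_integral_zero) (simp_all add: Fd_def cos_of_real[symmetric] sin_of_real[symmetric])
  moreover have "((\<lambda>\<theta>::real. p - (p + q * cos (of_real \<theta>) + r * sin (of_real \<theta>)))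
      has_integral ((2 * pi) *\<^sub>R p - circle_moment p q r 1)) {0..2 * pi}"
    using has_integral_diff[OF has_integral_const_real[of p 0 "2 * pi"] circle_moment_has_integral[of p q r 1]] by simp
  ultimately have "(2 * pi) *\<^sub>R p - circle_moment p q r 1 = 0"
    using has_integral_unique by blast
  then show ?thesis
    by (simp add: scaleR_conv_of_real)
qed

text \<open>The three-term recurrence of the moments, from integrating the derivative of the
  periodic function  F^(m+1) F'  where  F = p + q cos + r sin  and  F'' = p - F.\<close>
lemma circle_moment_recurrence:
  "(of_nat m + 2) * circle_moment p q r (m + 2)
     = (2 * of_nat m + 3) * p * circle_moment p q r (m + 1)
       - (of_nat m + 1) * (p\<^sup>2 - (q\<^sup>2 + r\<^sup>2)) * circle_moment p q r m"
proof -
  define R where "R = q\<^sup>2 + r\<^sup>2"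
  define F where "F = (\<lambda>z::complex. p + q * cos z + r * sin z)"
  define Fd where "Fd = (\<lambda>z::complex. - q * sin z + r * cos z)"
  define I where "I = circle_moment p q r"
  have dF: "(F has_field_derivative Fd z) (at z)" for z
    unfolding F_def Fd_def by (auto intro!: derivative_eq_intros simp: algebra_simps)
  have dFd: "(Fd has_field_derivative (p - F z)) (at z)" for z
    unfolding F_def Fd_def by (auto intro!: derivative_eq_intros simp: algebra_simps)
  have Fd_sq: "(Fd z)\<^sup>2 = R - (F z - p)\<^sup>2" for z
    using sin_cos_squared_add[of z] unfolding F_def Fd_def R_def by algebra
  define g' where "g' = (\<lambda>x::real. (of_nat m + 1) * (R - p\<^sup>2) * F (of_real x) ^ m
      + (2 * of_nat m + 3) * p * F (of_real x) ^ (m + 1) - (of_nat m + 2) * F (of_real x) ^ (m + 2))"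
  have combine: "(1 + c) * (b * t) * b + (p - a) * (a * t)
      = (c + 1) * (R - p\<^sup>2) * t + (2 * c + 3) * p * (a * t) - (c + 2) * (a * (a * t))"
    if "b\<^sup>2 = R - (a - p)\<^sup>2" for a b c t :: complex
    using that by algebra
  have "((\<lambda>x::real. F (of_real x) ^ Suc m * Fd (of_real x)) has_vector_derivative g' x) (at x)" for x
  proof -
    have deriv: "((\<lambda>z. F z ^ Suc m * Fd z) has_field_derivative
        ((1 + of_nat m) * (Fd (of_real x) * F (of_real x) ^ m)) * Fd (of_real x)
        + (p - F (of_real x)) * F (of_real x) ^ Suc m) (at (of_real x))"
      by (rule DERIV_mult[OF DERIV_power_Suc[OF dF] dFd])
    have eq: "((1 + of_nat m) * (Fd (of_real x) * F (of_real x) ^ m)) * Fd (of_real x)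
        + (p - F (of_real x)) * F (of_real x) ^ Suc m = g' x"
      unfolding g'_def power_Suc Suc_eq_plus1[symmetric] add_2_eq_Suc'
      by (rule combine[OF Fd_sq])
    show ?thesis
      using has_vector_derivative_real_field[OF deriv] unfolding eq .
  qed
  then have "(g' has_integral 0) {0..2 * pi}"
    by (rule derivative_integral_zero)
       (simp_all add: F_def Fd_def cos_of_real[symmetric] sin_of_real[symmetric])
  moreover have "(g' has_integral ((of_nat m + 1) * (R - p\<^sup>2) * I m
      + (2 * of_nat m + 3) * p * I (m + 1) - (of_nat m + 2) * I (m + 2))) {0..2 * pi}"
    unfolding g'_def F_def I_def
    by (intro has_integral_diff has_integral_add has_integral_mult_right circle_moment_has_integral)
  ultimately have "(of_nat m + 1) * (R - p\<^sup>2) * I m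
      + (2 * of_nat m + 3) * p * I (m + 1) - (of_nat m + 2) * I (m + 2) = 0"
    using has_integral_unique by blast
  then show ?thesis
    unfolding I_def R_def by (simp add: algebra_simps)
qed

lemma circle_moment_eq:
  "circle_moment p q r k = of_real (2 * pi) * hom_legendre k p (q\<^sup>2 + r\<^sup>2)"
proof (induction k rule: induct_nat_012)
  case 0
  show ?case by (simp add: circle_moment_0)
next
  case 1
  show ?case using circle_moment_1 by simp
next
  case (ge2 m)
  define R where "R = q\<^sup>2 + r\<^sup>2"
  have "of_nat (m + 2) \<noteq> (0 :: complex)"
    by (simp only: of_nat_eq_0_iff)
  then have nz: "(of_nat m + 2 :: complex) \<noteq> 0"
    by (simp add: add.commute)
  have IH: "circle_moment p q r m = of_real (2 * pi) * hom_legendre m p R"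
    "circle_moment p q r (m + 1) = of_real (2 * pi) * hom_legendre (Suc m) p R"
    using ge2 unfolding R_def by simp_all
  have "circle_moment p q r (Suc (Suc m))
      = ((of_nat m + 2) * circle_moment p q r (m + 2)) / (of_nat m + 2)"
    using nz by simp
  also have "\<dots> = ((2 * of_nat m + 3) * p * circle_moment p q r (m + 1)
         - (of_nat m + 1) * (p\<^sup>2 - R) * circle_moment p q r m) / (of_nat m + 2)"
    unfolding R_def by (simp only: circle_moment_recurrence)
  also have "\<dots> = of_real (2 * pi) * (((2 * of_nat m + 3) * p * hom_legendre (Suc m) p R
         - (of_nat m + 1) * (p\<^sup>2 - R) * hom_legendre m p R) / (of_nat m + 2))"
    unfolding IH times_divide_eq_right
    by (simp only: right_diff_distrib mult.assoc mult.left_commute[of "of_real (2 * pi)"])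
  finally show ?case
    by (simp only: hom_legendre.simps R_def)
qed

lemma laplace_integral:
  fixes q r c :: complex and x :: real
  assumes "q\<^sup>2 + r\<^sup>2 = c\<^sup>2 * ((of_real x)\<^sup>2 - 1)"
  shows "integral {0..2 * pi} (\<lambda>\<theta>::real. (c * of_real x + q * cos (of_real \<theta>) + r * sin (of_real \<theta>)) ^ k)
       = of_real (2 * pi) * c ^ k * of_real (legendre k x)"
  using circle_moment_eq[of "c * of_real x" q r k] assms
  unfolding circle_moment_def legendre_eq_hom_legendre
  by (simp add: power_mult_distrib hom_legendre_scale[symmetric] mult_ac)

lemma continuous_on_legendre: "continuous_on S (legendre k)"
proof (induction k rule: induct_nat_012)
  case (ge2 m)
  then have "continuous_on S (\<lambda>x. ((2 * real m + 3) * x * legendre (Suc m) x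
      - (real m + 1) * legendre m x) / (real m + 2))"
    by (intro continuous_intros) auto
  then show ?case
    by simp
qed (simp_all add: continuous_on_id)

lemma continuous_on_legendre_compose:
  "continuous_on S f \<Longrightarrow> continuous_on S (\<lambda>x. legendre k (f x))"
  using continuous_on_compose[OF _ continuous_on_legendre] by (simp add: o_def)

text \<open>Both sides arise from the double integral over the torus of a complex power
  (y + i E_1 cos t + i E_2 sin t)^k, integrating first in  t  resp. in  theta
  with Laplace's integral.\<close>
lemma legendre_addition_average:
  fixes a b w1 w2 w3 :: real
  assumes ab: "a\<^sup>2 + b\<^sup>2 = 1" and w: "w1\<^sup>2 + w2\<^sup>2 + w3\<^sup>2 = 1"
  shows "integral {0..2 * pi} (\<lambda>\<theta>. legendre k (a * w3 + b * w1 * cos \<theta> + b * w2 * sin \<theta>))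
       = 2 * pi * legendre k a * legendre k w3"
proof -
  define y where "y = (\<lambda>\<theta>::real. a * w3 + b * w1 * cos \<theta> + b * w2 * sin \<theta>)"
  define E1 where "E1 = (\<lambda>\<theta>::real. - w1 * sin \<theta> + w2 * cos \<theta>)"
  define E2 where "E2 = (\<lambda>\<theta>::real. a * w1 * cos \<theta> + a * w2 * sin \<theta> - b * w3)"
  define \<Phi> where "\<Phi> = (\<lambda>\<theta> t::real. (complex_of_real (y \<theta>) + (\<i> * of_real (E1 \<theta>)) * cos (of_real t)
      + (\<i> * of_real (E2 \<theta>)) * sin (of_real t)) ^ k)"
  \<comment> \<open>In the other order of integration the integrand has the same shape, with
      coefficients depending on  t.\<close>
  define \<mu> where "\<mu> = (\<lambda>t::real. complex_of_real a - \<i> * of_real b * sin (of_real t))"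
  define Q where "Q = (\<lambda>t::real. complex_of_real (b * w1) + \<i> * of_real w2 * cos (of_real t)
      + \<i> * of_real (a * w1) * sin (of_real t))"
  define R where "R = (\<lambda>t::real. complex_of_real (b * w2) - \<i> * of_real w1 * cos (of_real t)
      + \<i> * of_real (a * w2) * sin (of_real t))"
  have ab': "(complex_of_real a)\<^sup>2 + (of_real b)\<^sup>2 = 1"
    using arg_cong[OF ab, of complex_of_real] by simp
  have w': "(complex_of_real w1)\<^sup>2 + (of_real w2)\<^sup>2 + (of_real w3)\<^sup>2 = 1"
    using arg_cong[OF w, of complex_of_real] by simp
  have inner_t: "integral {0..2 * pi} (\<Phi> \<theta>) = of_real (2 * pi) * of_real (legendre k (y \<theta>))" for \<theta>
  proof -
    have "(E1 \<theta>)\<^sup>2 + (E2 \<theta>)\<^sup>2 = 1 - (y \<theta>)\<^sup>2"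
      using ab w sin_cos_squared_add[of \<theta>] unfolding E1_def E2_def y_def by algebra
    then have "complex_of_real ((E1 \<theta>)\<^sup>2 + (E2 \<theta>)\<^sup>2) = of_real (1 - (y \<theta>)\<^sup>2)"
      by (rule arg_cong)
    then have "(\<i> * complex_of_real (E1 \<theta>))\<^sup>2 + (\<i> * complex_of_real (E2 \<theta>))\<^sup>2
        = 1\<^sup>2 * ((of_real (y \<theta>))\<^sup>2 - 1)"
      by (simp add: power_mult_distrib algebra_simps)
    from laplace_integral[OF this, of k] show ?thesis
      unfolding \<Phi>_def by simp
  qed
  have inner_\<theta>: "integral {0..2 * pi} (\<lambda>\<theta>. \<Phi> \<theta> t) = of_real (2 * pi) * \<mu> t ^ k * of_real (legendre k w3)" for t
  proof -
    have shape: "\<Phi> \<theta> t = (\<mu> t * of_real w3 + Q t * cos (of_real \<theta>) + R t * sin (of_real \<theta>)) ^ k" for \<theta>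
      unfolding \<Phi>_def \<mu>_def Q_def R_def y_def E1_def E2_def
      by (simp add: cos_of_real sin_of_real) (simp add: algebra_simps)
    have "(Q t)\<^sup>2 + (R t)\<^sup>2 = (\<mu> t)\<^sup>2 * ((of_real w3)\<^sup>2 - 1)"
      using sin_cos_squared_add[of "complex_of_real t"] ab' w' power2_i
      unfolding Q_def R_def \<mu>_def of_real_mult by algebra
    from laplace_integral[OF this, of k] show ?thesis
      by (simp only: shape)
  qed
  have outer: "integral {0..2 * pi} (\<lambda>t. \<mu> t ^ k) = of_real (2 * pi) * of_real (legendre k a)"
  proof -
    have "0\<^sup>2 + (- \<i> * complex_of_real b)\<^sup>2 = 1\<^sup>2 * ((of_real a)\<^sup>2 - 1)"
      using ab' by (simp add: power_mult_distrib algebra_simps)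
    from laplace_integral[OF this, of k] show ?thesis
      unfolding \<mu>_def by (simp add: algebra_simps)
  qed
  have "continuous_on (cbox (0, 0) (2 * pi, 2 * pi)) (\<lambda>(\<theta>, t). \<Phi> \<theta> t)"
    unfolding \<Phi>_def y_def E1_def E2_def case_prod_unfold by (intro continuous_intros)
  from integral_swap_continuous[OF this]
  have swap: "integral {0..2 * pi} (\<lambda>\<theta>. integral {0..2 * pi} (\<Phi> \<theta>))
      = integral {0..2 * pi} (\<lambda>t. integral {0..2 * pi} (\<lambda>\<theta>. \<Phi> \<theta> t))"
    by (simp add: cbox_interval)
  have "(\<lambda>\<theta>. legendre k (y \<theta>)) integrable_on {0..2 * pi}"
    unfolding y_def by (intro integrable_continuous_interval continuous_on_legendre_compose continuous_intros)
  then have "complex_of_real (integral {0..2 * pi} (\<lambda>\<theta>. legendre k (y \<theta>))) * of_real (2 * pi)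
      = integral {0..2 * pi} (\<lambda>\<theta>. of_real (legendre k (y \<theta>))) * of_real (2 * pi)"
    using integral_unique[OF has_integral_of_real[OF integrable_integral]] by metis
  also have "\<dots> = integral {0..2 * pi} (\<lambda>\<theta>. integral {0..2 * pi} (\<Phi> \<theta>))"
    unfolding inner_t mult.commute[of "complex_of_real (2 * pi)"] by (rule integral_mult_left[symmetric])
  also have "\<dots> = of_real (2 * pi) * integral {0..2 * pi} (\<lambda>t. \<mu> t ^ k) * of_real (legendre k w3)"
    unfolding swap inner_\<theta> by (simp only: integral_mult_left integral_mult_right)
  also have "\<dots> = complex_of_real (2 * pi * legendre k a * legendre k w3) * of_real (2 * pi)"
    unfolding outer by simp
  finally show ?thesis
    unfolding y_def of_real_eq_iff mult_cancel_right by simp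
qed

lemma inner_matrix_vector_transpose:
  fixes M :: "real^'n^'m"
  shows "(M *v x) \<bullet> y = x \<bullet> (transpose M *v y)"
proof -
  have "(M *v x) \<bullet> y = (y v* M) \<bullet> x"
    by (simp only: inner_commute[of _ y] dot_lmul_matrix)
  then show ?thesis
    by (simp add: inner_commute)
qed

lemma orthogonal_matrix_inner:
  fixes A :: "real^'n^'n"
  assumes "orthogonal_matrix A"
  shows "(A *v x) \<bullet> (A *v y) = x \<bullet> y"
  using assms unfolding inner_matrix_vector_transpose matrix_vector_mul_assoc orthogonal_matrix
  by simp

lemma inner_real3: "(x::real^3) \<bullet> y = x$1 * y$1 + x$2 * y$2 + x$3 * y$3"
  by (simp add: inner_vec_def sum_3)

lemma orthogonal_Ml: "orthogonal_matrix (Ml \<phi> \<theta>)"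
  unfolding orthogonal_matrix
  by (simp add: vec_eq_iff forall_3 Ml_def matrix_matrix_mult_def sum_3 transpose_def mat_def
      power2_eq_square[symmetric] algebra_simps)
     (use sin_cos_squared_add[of \<phi>] sin_cos_squared_add[of \<theta>] in \<open>intro conjI; algebra\<close>)

lemma orthogonal_Mr: "orthogonal_matrix (Mr \<phi> \<theta>)"
  unfolding orthogonal_matrix
  by (simp add: vec_eq_iff forall_3 Mr_def matrix_matrix_mult_def sum_3 transpose_def mat_def
      power2_eq_square[symmetric] algebra_simps)
     (use sin_cos_squared_add[of \<phi>] sin_cos_squared_add[of \<theta>] in \<open>intro conjI; algebra\<close>)

definition unif_circle :: "real measure" where
  "unif_circle = uniform_measure lborel {0<..<2 * pi}"

lemma sets_unif_circle: "sets unif_circle = sets borel"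
  by (simp add: unif_circle_def)

lemma prob_space_unif_circle: "prob_space unif_circle"
  unfolding unif_circle_def by (rule prob_space_uniform_measure) auto

lemma integral_unif_circle:
  fixes h :: "real \<Rightarrow> real"
  assumes h: "continuous_on UNIV h"
  shows "integral\<^sup>L unif_circle h = integral {0..2 * pi} h / (2 * pi)"
proof -
  have density: "unif_circle = density lborel (\<lambda>x. ennreal (indicator {0<..<2 * pi} x / (2 * pi)))"
    unfolding unif_circle_def uniform_measure_def
    by (intro arg_cong[where f = "density lborel"] ext)
       (simp add: divide_ennreal[symmetric] ennreal_indicator)
  have "set_integrable lborel {0..2 * pi} h"
    by (rule borel_integrable_atLeastAtMost') (rule continuous_on_subset[OF h], auto)
  then have integrable: "set_integrable lborel {0<..<2 * pi} h"
    by (rule set_integrable_subset) auto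
  have "integral\<^sup>L unif_circle h = (\<integral>x. (indicator {0<..<2 * pi} x / (2 * pi)) *\<^sub>R h x \<partial>lborel)"
    unfolding density by (rule integral_density) (auto simp: borel_measurable_continuous_onI[OF h])
  also have "\<dots> = (LINT x:{0<..<2 * pi}|lborel. h x) / (2 * pi)"
    by (simp add: set_lebesgue_integral_def divide_simps)
  also have "\<dots> = integral {0..2 * pi} h / (2 * pi)"
    by (simp add: set_borel_integral_eq_integral(2)[OF integrable] integral_open_interval_real)
  finally show ?thesis .
qed

text \<open>The basic one-angle step: if a rotation family  M  moves  e_3  along the circle of
  latitude  a = cos(polar angle)  then averaging  P_k  of the rotated pole against  xi
  over that circle multiplies by  P_k(a)  (addition theorem).\<close>
lemma circle_average:
  fixes A :: "real^3^3" and M :: "real \<Rightarrow> real^3^3"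
  assumes A: "orthogonal_matrix A" and xi: "norm \<xi> = 1"
    and ab: "a\<^sup>2 + b\<^sup>2 = 1"
    and M: "\<And>\<theta>. M \<theta> *v e3 = vector [b * cos \<theta>, b * sin \<theta>, a]"
  shows "integral\<^sup>L unif_circle (\<lambda>\<theta>. legendre k (((A ** M \<theta>) *v e3) \<bullet> \<xi>))
       = legendre k ((A *v e3) \<bullet> \<xi>) * legendre k a"
proof -
  define w where "w = transpose A *v \<xi>"
  have "w \<bullet> w = \<xi> \<bullet> \<xi>"
    unfolding w_def by (rule orthogonal_matrix_inner) (simp add: A)
  then have w: "(w$1)\<^sup>2 + (w$2)\<^sup>2 + (w$3)\<^sup>2 = 1"
    using xi by (simp add: inner_real3 power2_eq_square norm_eq_1)
  have arg: "((A ** M \<theta>) *v e3) \<bullet> \<xi> = a * w$3 + b * w$1 * cos \<theta> + b * w$2 * sin \<theta>" for \<theta>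
  proof -
    have "((A ** M \<theta>) *v e3) \<bullet> \<xi> = (M \<theta> *v e3) \<bullet> w"
      unfolding w_def matrix_vector_mul_assoc[symmetric] by (rule inner_matrix_vector_transpose)
    then show ?thesis
      by (simp add: M inner_real3 algebra_simps)
  qed
  have "(A *v e3) \<bullet> \<xi> = e3 \<bullet> w"
    unfolding w_def by (rule inner_matrix_vector_transpose)
  then have "(A *v e3) \<bullet> \<xi> = w$3"
    by (simp add: inner_real3 e3_def)
  moreover have "integral\<^sup>L unif_circle (\<lambda>\<theta>. legendre k (a * w$3 + b * w$1 * cos \<theta> + b * w$2 * sin \<theta>))
      = legendre k a * legendre k (w$3)"
    using legendre_addition_average[OF ab w, of k]
    by (subst integral_unif_circle) (auto intro!: continuous_on_legendre_compose continuous_intros)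
  ultimately show ?thesis
    unfolding arg by simp
qed

lemma circle_average_Ml:
  fixes A :: "real^3^3"
  assumes "orthogonal_matrix A" and "norm \<xi> = 1"
  shows "integral\<^sup>L unif_circle (\<lambda>\<theta>. legendre k (((A ** Ml \<phi> \<theta>) *v e3) \<bullet> \<xi>))
       = legendre k ((A *v e3) \<bullet> \<xi>) * legendre k (cos \<phi>)"
  by (rule circle_average[OF assms, where b = "sin \<phi>"])
     (auto simp: Ml_def e3_def vec_eq_iff forall_3 matrix_vector_mult_def sum_3)

lemma circle_average_Mr:
  fixes A :: "real^3^3"
  assumes "orthogonal_matrix A" and "norm \<xi> = 1"
  shows "integral\<^sup>L unif_circle (\<lambda>\<theta>. legendre k (((A ** Mr \<phi> \<theta>) *v e3) \<bullet> \<xi>))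
       = legendre k ((A *v e3) \<bullet> \<xi>) * legendre k (sin \<phi>)"
  by (rule circle_average[OF assms, where b = "- cos \<phi>"])
     (auto simp: Mr_def e3_def vec_eq_iff forall_3 matrix_vector_mult_def sum_3)

interpretation unif_product: product_sigma_finite "\<lambda>_::nat. unif_circle"
  unfolding product_sigma_finite_def
  using prob_space_imp_sigma_finite[OF prob_space_unif_circle] by simp

lemma prob_space_unif_product: "prob_space (PiM K (\<lambda>_::nat. unif_circle))"
  by (rule prob_space_PiM) (rule prob_space_unif_circle)

text \<open>Every coordinate is measurable, also outside the index set (where it is constant).\<close>
lemma measurable_coordinate:
  "(\<lambda>\<theta>. \<theta> i) \<in> borel_measurable (PiM K (\<lambda>_::nat. unif_circle))"
proof (cases "i \<in> K")
  case True
  then have "(\<lambda>\<theta>. \<theta> i) \<in> measurable (PiM K (\<lambda>_::nat. unif_circle)) unif_circle"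
    by (rule measurable_component_singleton)
  then show ?thesis
    using measurable_cong_sets[OF refl sets_unif_circle] by blast
next
  case False
  then have "\<theta> i = undefined" if "\<theta> \<in> space (PiM K (\<lambda>_::nat. unif_circle))" for \<theta>
    using that by (auto simp: space_PiM PiE_def extensional_def)
  then show ?thesis
    using measurable_cong[of "PiM K (\<lambda>_::nat. unif_circle)" "\<lambda>\<theta>. \<theta> i" "\<lambda>_. undefined" borel]
    by simp
qed

lemma integrable_unif_product_bounded:
  fixes g :: "(nat \<Rightarrow> real) \<Rightarrow> real"
  assumes "g \<in> borel_measurable (PiM K (\<lambda>_. unif_circle))" and "\<And>y. \<bar>g y\<bar> \<le> C"
  shows "integrable (PiM K (\<lambda>_. unif_circle)) g"
proof -
  interpret prob_space "PiM K (\<lambda>_. unif_circle)"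
    by (rule prob_space_unif_product)
  show ?thesis
    by (rule integrable_const_bound[where B = C]) (use assms in auto)
qed

lemma integral_unif_product_restrict:
  fixes g :: "(nat \<Rightarrow> real) \<Rightarrow> real"
  assumes K: "finite K" and LK: "L \<subseteq> K"
    and dep: "\<And>y y'. (\<And>i. i \<in> L \<Longrightarrow> y i = y' i) \<Longrightarrow> g y = g y'"
    and int: "integrable (PiM K (\<lambda>_. unif_circle)) g"
  shows "integral\<^sup>L (PiM K (\<lambda>_. unif_circle)) g = integral\<^sup>L (PiM L (\<lambda>_. unif_circle)) g"
proof -
  have KL: "K = L \<union> (K - L)"
    using LK by auto
  have "integral\<^sup>L (PiM K (\<lambda>_. unif_circle)) g
      = (\<integral>x. (\<integral>y. g (merge L (K - L) (x, y)) \<partial>PiM (K - L) (\<lambda>_. unif_circle)) \<partial>PiM L (\<lambda>_. unif_circle))"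
    using unif_product.product_integral_fold[of L "K - L" g] K LK int KL
    by (metis Diff_disjoint finite_Diff finite_subset)
  also have "\<dots> = (\<integral>x. g x \<partial>PiM L (\<lambda>_. unif_circle))"
  proof (rule Bochner_Integration.integral_cong[OF refl])
    fix x
    have "(\<integral>y. g (merge L (K - L) (x, y)) \<partial>PiM (K - L) (\<lambda>_. unif_circle))
        = (\<integral>y. g x \<partial>PiM (K - L) (\<lambda>_. unif_circle))"
      by (rule Bochner_Integration.integral_cong[OF refl], rule dep) (simp add: merge_def)
    then show "(\<integral>y. g (merge L (K - L) (x, y)) \<partial>PiM (K - L) (\<lambda>_. unif_circle)) = g x"
      using prob_space.prob_space[OF prob_space_unif_product] by simp
  qed
  finally show ?thesis .
qed

lemma integral_unif_product_insert:
  fixes G :: "real \<Rightarrow> (nat \<Rightarrow> real) \<Rightarrow> real" and \<Phi> :: "real \<Rightarrow> real"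
  assumes K: "finite K" and m: "m \<notin> K" and LK: "L \<subseteq> K"
    and dep: "\<And>x y y'. (\<And>i. i \<in> L \<Longrightarrow> y i = y' i) \<Longrightarrow> G x y = G x y'"
    and meas: "(\<lambda>\<theta>. G (\<theta> m) \<theta>) \<in> borel_measurable (PiM (insert m K) (\<lambda>_. unif_circle))"
    and meas_K: "\<And>x. G x \<in> borel_measurable (PiM K (\<lambda>_. unif_circle))"
    and bounded: "\<And>x y. \<bar>G x y\<bar> \<le> C"
    and inner: "\<And>x. integral\<^sup>L (PiM L (\<lambda>_. unif_circle)) (G x) = \<Phi> x"
    and meas_\<Phi>: "\<Phi> \<in> borel_measurable unif_circle"
  shows "integral\<^sup>L (PiM (insert m K) (\<lambda>_. unif_circle)) (\<lambda>\<theta>. G (\<theta> m) \<theta>)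
       = integral\<^sup>L unif_circle \<Phi>"
proof -
  have int: "integrable (PiM ({m} \<union> K) (\<lambda>_. unif_circle)) (\<lambda>\<theta>. G (\<theta> m) \<theta>)"
    using integrable_unif_product_bounded[OF meas bounded] by simp
  have "integral\<^sup>L (PiM (insert m K) (\<lambda>_. unif_circle)) (\<lambda>\<theta>. G (\<theta> m) \<theta>)
      = (\<integral>x. (\<integral>y. G (merge {m} K (x, y) m) (merge {m} K (x, y)) \<partial>PiM K (\<lambda>_. unif_circle))
          \<partial>PiM {m} (\<lambda>_. unif_circle))"
    using unif_product.product_integral_fold[OF _ _ K int] m by simp
  also have "\<dots> = (\<integral>x. \<Phi> (x m) \<partial>PiM {m} (\<lambda>_. unif_circle))"
  proof (rule Bochner_Integration.integral_cong[OF refl])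
    fix x
    have "(\<integral>y. G (merge {m} K (x, y) m) (merge {m} K (x, y)) \<partial>PiM K (\<lambda>_. unif_circle))
        = (\<integral>y. G (x m) y \<partial>PiM K (\<lambda>_. unif_circle))"
    proof (rule Bochner_Integration.integral_cong[OF refl])
      fix y
      have "G (x m) (merge {m} K (x, y)) = G (x m) y"
        by (rule dep) (use LK m in \<open>auto simp: merge_def\<close>)
      then show "G (merge {m} K (x, y) m) (merge {m} K (x, y)) = G (x m) y"
        by (simp add: merge_def)
    qed
    also have "\<dots> = \<Phi> (x m)"
      using integral_unif_product_restrict[OF K LK dep integrable_unif_product_bounded[OF meas_K bounded]]
      by (simp add: inner)
    finally show "(\<integral>y. G (merge {m} K (x, y) m) (merge {m} K (x, y)) \<partial>PiM K (\<lambda>_. unif_circle))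
        = \<Phi> (x m)" .
  qed
  also have "\<dots> = integral\<^sup>L unif_circle \<Phi>"
    by (rule unif_product.product_integral_singleton[OF meas_\<Phi>])
  finally show ?thesis .
qed

lemma measurable_matrix_mult_entries:
  fixes W V :: "'b \<Rightarrow> real^'n^'n"
  assumes "\<And>a b. (\<lambda>x. W x $ a $ b) \<in> borel_measurable N"
    and "\<And>a b. (\<lambda>x. V x $ a $ b) \<in> borel_measurable N"
  shows "(\<lambda>x. (W x ** V x) $ a $ b) \<in> borel_measurable N"
  unfolding matrix_matrix_mult_def using assms by simp

lemma pole_inner_eq: "((W::real^3^3) *v e3) \<bullet> \<xi> = (\<Sum>a\<in>UNIV. W $ a $ 3 * \<xi> $ a)"
  by (simp add: inner_vec_def matrix_vector_mult_def e3_def sum_3)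

lemma measurable_legendre_pole:
  fixes W :: "'b \<Rightarrow> real^3^3"
  assumes "\<And>a b. (\<lambda>x. W x $ a $ b) \<in> borel_measurable N"
  shows "(\<lambda>x. legendre k ((W x *v e3) \<bullet> \<xi>)) \<in> borel_measurable N"
proof -
  have "(\<lambda>x. \<Sum>a\<in>UNIV. W x $ a $ 3 * \<xi> $ a) \<in> borel_measurable N"
    using assms by simp
  from borel_measurable_continuous_on[OF continuous_on_legendre this] show ?thesis
    by (simp add: pole_inner_eq)
qed

text \<open>A rotated pole has unit length, so  P_k  is evaluated on  [-1, 1]  only.\<close>
lemma legendre_pole_bounded:
  fixes \<xi> :: "real^3"
  assumes xi: "norm \<xi> = 1"
  obtains C where "\<And>W. orthogonal_matrix W \<Longrightarrow> \<bar>legendre k ((W *v e3) \<bullet> \<xi>)\<bar> \<le> C"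
proof -
  have "compact (legendre k ` {-1..1})"
    by (rule compact_continuous_image[OF continuous_on_legendre compact_Icc])
  then obtain C where C: "\<And>x. x \<in> {-1..1} \<Longrightarrow> \<bar>legendre k x\<bar> \<le> C"
    using compact_imp_bounded bounded_iff by (metis image_eqI real_norm_def)
  have "\<bar>legendre k ((W *v e3) \<bullet> \<xi>)\<bar> \<le> C" if W: "orthogonal_matrix W" for W :: "real^3^3"
  proof -
    have "(W *v e3) \<bullet> (W *v e3) = e3 \<bullet> e3"
      by (rule orthogonal_matrix_inner[OF W])
    then have "norm (W *v e3) = 1"
      by (simp add: e3_def inner_real3 norm_eq_1)
    then have "\<bar>(W *v e3) \<bullet> \<xi>\<bar> \<le> 1"
      using Cauchy_Schwarz_ineq2[of "W *v e3" \<xi>] xi by simp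
    then show ?thesis
      by (intro C) (auto simp: abs_le_iff)
  qed
  then show ?thesis
    using that by blast
qed

lemma continuous_Ml_entries: "continuous_on UNIV (\<lambda>x. Ml \<phi> x $ a $ b)"
proof -
  have "\<forall>a b. continuous_on UNIV (\<lambda>x. Ml \<phi> x $ a $ b)"
    by (simp add: forall_3 Ml_def continuous_intros)
  then show ?thesis by blast
qed

lemma continuous_Mr_entries: "continuous_on UNIV (\<lambda>x. Mr \<phi> x $ a $ b)"
proof -
  have "\<forall>a b. continuous_on UNIV (\<lambda>x. Mr \<phi> x $ a $ b)"
    by (simp add: forall_3 Mr_def continuous_intros)
  then show ?thesis by blast
qed

lemma node_average:
  fixes M :: "real \<Rightarrow> real^3^3" and S :: "(nat \<Rightarrow> real) \<Rightarrow> real^3^3" and A :: "real^3^3"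
  assumes K: "finite K" and m: "m \<notin> K" and LK: "L \<subseteq> K" and xi: "norm \<xi> = 1"
    and A: "orthogonal_matrix A"
    and M_orth: "\<And>x. orthogonal_matrix (M x)" and S_orth: "\<And>y. orthogonal_matrix (S y)"
    and S_dep: "\<And>y y'. (\<And>i. i \<in> L \<Longrightarrow> y i = y' i) \<Longrightarrow> S y = S y'"
    and M_cont: "\<And>a b. continuous_on UNIV (\<lambda>x. M x $ a $ b)"
    and S_meas: "\<And>N a b. (\<lambda>y. S y $ a $ b) \<in> borel_measurable (PiM N (\<lambda>_. unif_circle))"
    and subtree: "\<And>B. orthogonal_matrix B \<Longrightarrow>
      integral\<^sup>L (PiM L (\<lambda>_. unif_circle)) (\<lambda>y. legendre k (((B ** S y) *v e3) \<bullet> \<xi>))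
        = legendre k ((B *v e3) \<bullet> \<xi>) * f"
    and root: "integral\<^sup>L unif_circle (\<lambda>x. legendre k (((A ** M x) *v e3) \<bullet> \<xi>))
        = legendre k ((A *v e3) \<bullet> \<xi>) * c"
  shows "integral\<^sup>L (PiM (insert m K) (\<lambda>_. unif_circle))
           (\<lambda>\<theta>. legendre k (((A ** M (\<theta> m) ** S \<theta>) *v e3) \<bullet> \<xi>))
       = legendre k ((A *v e3) \<bullet> \<xi>) * (f * c)"
proof -
  define G where "G = (\<lambda>x y. legendre k (((A ** M x ** S y) *v e3) \<bullet> \<xi>))"
  define \<Phi> where "\<Phi> = (\<lambda>x. legendre k (((A ** M x) *v e3) \<bullet> \<xi>) * f)"
  obtain C where C: "\<And>W. orthogonal_matrix W \<Longrightarrow> \<bar>legendre k ((W *v e3) \<bullet> \<xi>)\<bar> \<le> C"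
    using legendre_pole_bounded[OF xi] by blast
  have M_meas: "(\<lambda>x. M x $ a $ b) \<in> borel_measurable N" if "sets N = sets borel" for N a b
    using borel_measurable_continuous_onI[OF M_cont] measurable_cong_sets[OF that refl] by blast
  have "integral\<^sup>L (PiM (insert m K) (\<lambda>_. unif_circle)) (\<lambda>\<theta>. G (\<theta> m) \<theta>) = integral\<^sup>L unif_circle \<Phi>"
  proof (rule integral_unif_product_insert[OF K m LK, where G = G and \<Phi> = \<Phi> and C = C])
    show "G x y = G x y'" if "\<And>i. i \<in> L \<Longrightarrow> y i = y' i" for x y y'
      unfolding G_def using S_dep[OF that] by simp
    show "(\<lambda>\<theta>. G (\<theta> m) \<theta>) \<in> borel_measurable (PiM (insert m K) (\<lambda>_. unif_circle))"
      unfolding G_def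
      by (intro measurable_legendre_pole measurable_matrix_mult_entries S_meas borel_measurable_const
          borel_measurable_continuous_on[OF M_cont measurable_coordinate])
    show "G x \<in> borel_measurable (PiM K (\<lambda>_. unif_circle))" for x
      unfolding G_def by (intro measurable_legendre_pole measurable_matrix_mult_entries S_meas borel_measurable_const)
    show "\<bar>G x y\<bar> \<le> C" for x y
      unfolding G_def by (intro C orthogonal_matrix_mul A M_orth S_orth)
    show "integral\<^sup>L (PiM L (\<lambda>_. unif_circle)) (G x) = \<Phi> x" for x
      unfolding G_def \<Phi>_def matrix_mul_assoc
      by (intro subtree orthogonal_matrix_mul A M_orth)
    show "\<Phi> \<in> borel_measurable unif_circle"
      unfolding \<Phi>_def
      by (intro borel_measurable_times borel_measurable_const measurable_legendre_pole
          measurable_matrix_mult_entries M_meas sets_unif_circle)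
  qed
  also have "\<dots> = legendre k ((A *v e3) \<bullet> \<xi>) * (f * c)"
    unfolding \<Phi>_def using root by simp
  finally show ?thesis
    unfolding G_def .
qed

lemma leaves_pos: "1 \<le> leaves t"
  by (induction t) auto

lemma orthogonal_Ostar: "orthogonal_matrix (Ostar t j \<phi> \<theta>)"
  by (induction t j \<phi> \<theta> rule: Ostar.induct)
     (auto simp: Let_def orthogonal_matrix_id intro!: orthogonal_matrix_mul orthogonal_Ml orthogonal_Mr)

lemma Ostar_depends:
  "(\<And>i. i < leaves t - 1 \<Longrightarrow> \<theta> i = \<theta>' i) \<Longrightarrow> Ostar t j \<phi> \<theta> = Ostar t j \<phi> \<theta>'"
proof (induction t arbitrary: j \<phi> \<theta> \<theta>')
  case (Node l r)
  have "1 \<le> leaves l" "1 \<le> leaves r"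
    by (rule leaves_pos)+
  with Node.prems have "\<theta> (leaves l + leaves r - 2) = \<theta>' (leaves l + leaves r - 2)"
    and "Ostar l j \<phi> \<theta> = Ostar l j \<phi> \<theta>'"
    and "Ostar r (j - leaves l) (\<lambda>i. \<phi> (i + leaves l - 1)) (\<lambda>i. \<theta> (i + leaves l - 1))
       = Ostar r (j - leaves l) (\<lambda>i. \<phi> (i + leaves l - 1)) (\<lambda>i. \<theta>' (i + leaves l - 1))"
    by (auto intro!: Node.IH)
  then show ?case
    by (simp add: Let_def)
qed simp

lemma measurable_Ostar_entries:
  "(\<lambda>\<theta>. Ostar t j \<phi> (\<lambda>i. \<theta> (i + s)) $ a $ b) \<in> borel_measurable (PiM K (\<lambda>_. unif_circle))"
proof (induction t arbitrary: j \<phi> s a b)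
  case (Node l r)
  have shift: "i + leaves l - Suc 0 + s = i + (s + leaves l - Suc 0)" for i
    using leaves_pos[of l] by simp
  have "(\<lambda>\<theta>. Ml (\<phi> (leaves l + leaves r - 2)) (\<theta> (leaves l + leaves r - 2 + s)) $ a $ b)
      \<in> borel_measurable (PiM K (\<lambda>_. unif_circle))"
    "(\<lambda>\<theta>. Mr (\<phi> (leaves l + leaves r - 2)) (\<theta> (leaves l + leaves r - 2 + s)) $ a $ b)
      \<in> borel_measurable (PiM K (\<lambda>_. unif_circle))" for a b
    by (intro borel_measurable_continuous_on[OF _ measurable_coordinate]
        continuous_Ml_entries continuous_Mr_entries)+
  then show ?case
    using Node.IH(1) Node.IH(2)[of _ _ "s + leaves l - 1"]
    by (cases "j \<le> leaves l") (simp_all add: Let_def shift measurable_matrix_mult_entries)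
qed simp

definition pole_average ::
    "nat \<Rightarrow> real^3 \<Rightarrow> real^3^3 \<Rightarrow> mtree \<Rightarrow> nat \<Rightarrow> (nat \<Rightarrow> real) \<Rightarrow> nat \<Rightarrow> real" where
  "pole_average k \<xi> A t j \<phi> s =
     integral\<^sup>L (PiM {s..<s + (leaves t - 1)} (\<lambda>_. unif_circle))
       (\<lambda>\<theta>. legendre k (((A ** Ostar t j \<phi> (\<lambda>i. \<theta> (i + s))) *v e3) \<bullet> \<xi>))"

lemma Node_angle_block:
  fixes s :: nat and l r :: mtree
  defines "m \<equiv> s + leaves l + leaves r - 2"
  shows "{s..<s + (leaves (Node l r) - 1)} = insert m {s..<m}"
    and "leaves l + leaves r - 2 + s = m"
    and "{s..<s + (leaves l - 1)} \<subseteq> {s..<m}"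
    and "{s + leaves l - 1..<s + leaves l - 1 + (leaves r - 1)} \<subseteq> {s..<m}"
  using leaves_pos[of l] leaves_pos[of r] unfolding m_def by auto

lemma pole_average_Node_left:
  assumes xi: "norm \<xi> = 1" and A: "orthogonal_matrix A" and j: "j \<le> leaves l"
    and IH: "\<And>B. orthogonal_matrix B \<Longrightarrow>
      pole_average k \<xi> B l j \<phi> s = legendre k ((B *v e3) \<bullet> \<xi>) * fk k l j \<phi>"
  shows "pole_average k \<xi> A (Node l r) j \<phi> s = legendre k ((A *v e3) \<bullet> \<xi>) * fk k (Node l r) j \<phi>"
proof -
  define m where "m = s + leaves l + leaves r - 2"
  define n where "n = leaves l + leaves r"
  note block = Node_angle_block[where s = s and l = l and r = r, folded m_def]
  have root: "Ostar (Node l r) j \<phi> (\<lambda>i. \<theta> (i + s))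
      = Ml (\<phi> (n - 2)) (\<theta> m) ** Ostar l j \<phi> (\<lambda>i. \<theta> (i + s))" for \<theta>
    using j block(2) by (simp add: Let_def n_def)
  have fk: "fk k (Node l r) j \<phi> = fk k l j \<phi> * legendre k (cos (\<phi> (n - 2)))"
    using j by (simp add: Let_def n_def)
  have "integral\<^sup>L (PiM (insert m {s..<m}) (\<lambda>_. unif_circle))
      (\<lambda>\<theta>. legendre k (((A ** Ml (\<phi> (n - 2)) (\<theta> m) ** Ostar l j \<phi> (\<lambda>i. \<theta> (i + s))) *v e3) \<bullet> \<xi>))
    = legendre k ((A *v e3) \<bullet> \<xi>) * (fk k l j \<phi> * legendre k (cos (\<phi> (n - 2))))"
  proof (rule node_average[OF _ _ block(3) xi A])
    show "Ostar l j \<phi> (\<lambda>i. y (i + s)) = Ostar l j \<phi> (\<lambda>i. y' (i + s))"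
      if "\<And>i. i \<in> {s..<s + (leaves l - 1)} \<Longrightarrow> y i = y' i" for y y'
      by (rule Ostar_depends) (use that in auto)
  qed (use IH in \<open>auto simp: pole_average_def
        intro: orthogonal_Ml orthogonal_Ostar continuous_Ml_entries measurable_Ostar_entries
        circle_average_Ml[OF A xi]\<close>)
  then show ?thesis
    unfolding pole_average_def by (simp only: block(1) root fk matrix_mul_assoc)
qed

lemma pole_average_Node_right:
  assumes xi: "norm \<xi> = 1" and A: "orthogonal_matrix A" and j: "leaves l < j"
    and IH: "\<And>B. orthogonal_matrix B \<Longrightarrow>
      pole_average k \<xi> B r (j - leaves l) (\<lambda>i. \<phi> (i + leaves l - 1)) (s + leaves l - 1)
        = legendre k ((B *v e3) \<bullet> \<xi>) * fk k r (j - leaves l) (\<lambda>i. \<phi> (i + leaves l - 1))"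
  shows "pole_average k \<xi> A (Node l r) j \<phi> s = legendre k ((A *v e3) \<bullet> \<xi>) * fk k (Node l r) j \<phi>"
proof -
  define m where "m = s + leaves l + leaves r - 2"
  define n where "n = leaves l + leaves r"
  define s' where "s' = s + leaves l - 1"
  define \<phi>' where "\<phi>' = (\<lambda>i. \<phi> (i + leaves l - 1))"
  note block = Node_angle_block[where s = s and l = l and r = r, folded m_def s'_def]
  have root: "Ostar (Node l r) j \<phi> (\<lambda>i. \<theta> (i + s))
      = Mr (\<phi> (n - 2)) (\<theta> m) ** Ostar r (j - leaves l) \<phi>' (\<lambda>i. \<theta> (i + s'))" for \<theta>
    using j block(2) leaves_pos[of l] by (simp add: Let_def n_def s'_def \<phi>'_def ac_simps)
  have fk: "fk k (Node l r) j \<phi> = fk k r (j - leaves l) \<phi>' * legendre k (sin (\<phi> (n - 2)))"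
    using j by (simp add: Let_def n_def \<phi>'_def)
  have "integral\<^sup>L (PiM (insert m {s..<m}) (\<lambda>_. unif_circle))
      (\<lambda>\<theta>. legendre k (((A ** Mr (\<phi> (n - 2)) (\<theta> m) ** Ostar r (j - leaves l) \<phi>' (\<lambda>i. \<theta> (i + s'))) *v e3) \<bullet> \<xi>))
    = legendre k ((A *v e3) \<bullet> \<xi>) * (fk k r (j - leaves l) \<phi>' * legendre k (sin (\<phi> (n - 2))))"
  proof (rule node_average[OF _ _ block(4) xi A])
    show "Ostar r (j - leaves l) \<phi>' (\<lambda>i. y (i + s')) = Ostar r (j - leaves l) \<phi>' (\<lambda>i. y' (i + s'))"
      if "\<And>i. i \<in> {s'..<s' + (leaves r - 1)} \<Longrightarrow> y i = y' i" for y y'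
      by (rule Ostar_depends) (use that in auto)
  qed (use IH in \<open>auto simp: pole_average_def s'_def \<phi>'_def
        intro: orthogonal_Mr orthogonal_Ostar continuous_Mr_entries measurable_Ostar_entries
        circle_average_Mr[OF A xi]\<close>)
  then show ?thesis
    unfolding pole_average_def by (simp only: block(1) root fk matrix_mul_assoc)
qed

lemma pole_average_eq:
  assumes xi: "norm \<xi> = 1"
  shows "orthogonal_matrix A \<Longrightarrow> 1 \<le> j \<Longrightarrow> j \<le> leaves t \<Longrightarrow>
    pole_average k \<xi> A t j \<phi> s = legendre k ((A *v e3) \<bullet> \<xi>) * fk k t j \<phi>"
proof (induction t arbitrary: A j \<phi> s)
  case Leaf
  then show ?case
    using prob_space.prob_space[OF prob_space_unif_product] by (simp add: pole_average_def)
next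
  case (Node l r)
  show ?case
  proof (cases "j \<le> leaves l")
    case True
    then show ?thesis
      using Node by (intro pole_average_Node_left xi) auto
  next
    case False
    then show ?thesis
      using Node by (intro pole_average_Node_right xi) auto
  qed
qed

text \<open>Only the rotation  B(u)
  matters.\<close>
theorem mainTheorem10:
  fixes k j :: nat and t :: mtree and \<phi> :: "nat \<Rightarrow> real"
    and u \<xi> :: "real^3" and B :: "real^3 \<Rightarrow> real^3^3"
  assumes "1 \<le> j" and "j \<le> leaves t"
    and "\<forall>i < leaves t - 1. \<phi> i \<in> {0..pi}"
    and "u \<in> sphere 0 1" and "norm \<xi> = 1"
    and "B \<in> borel_measurable (restrict_space borel (sphere 0 1))"
    and "\<forall>v \<in> sphere 0 1. B v \<in> SO3"
    and "B u *v e3 = u"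
  shows "(\<integral>\<theta>. legendre k (((B u ** Ostar t j \<phi> \<theta>) *v e3) \<bullet> \<xi>) \<partial>unif_angles (leaves t))
           = legendre k (u \<bullet> \<xi>) * fk k t j \<phi>"
proof -
  have "orthogonal_matrix (B u)"
    using assms(4,7) by (auto simp: SO3_def)
  from pole_average_eq[OF assms(5) this assms(1,2), of k \<phi> 0]
  have "integral\<^sup>L (PiM {0..<leaves t - 1} (\<lambda>_. unif_circle))
      (\<lambda>\<theta>. legendre k (((B u ** Ostar t j \<phi> \<theta>) *v e3) \<bullet> \<xi>))
    = legendre k ((B u *v e3) \<bullet> \<xi>) * fk k t j \<phi>"
    by (simp add: pole_average_def)
  then show ?thesis
    unfolding unif_angles_def unif_circle_def assms(8) by (simp add: atLeast0LessThan)
qed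

end
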